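(* Let $\nu_1,\dots,\nu_d>0$ with $\sum_{i=1}^d\nu_i=d$, and let $\kappa\ge1$ satisfy $\nu_{\max}/\nu_{\min}\le\kappa$, where $\nu_{\max}=\max_i\nu_i$, $\nu_{\min}=\min_i\nu_i$. Then $$\mathbb{E}_R\Big[\sum_{i=1}^d\log\sum_{j=1}^dR_{ij}^2\nu_j\Big]\le\frac{2}{(d+2)\kappa^2}\sum_{i=1}^d\log\nu_i,$$ where the expectation is over $R$ drawn from the uniform (Haar) distribution on the orthogonal group $O(d)$. *)

theory Defs
  imports "HOL-Analysis.Analysis" "HOL-Probability.Probability"
begin

text \<open>Uniform (Haar) probability distribution on the orthogonal group O(d), realised as a
Borel probability measure on d x d real matrices, concentrated on the orthogonal matrices and
invariant under left multiplication by every orthogonal matrix. (Such a measure exists and is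
unique: it is the normalised Haar measure of O(d).)\<close>

definition haar_orthogonal :: "(real^'n^'n) measure \<Rightarrow> bool" where
  "haar_orthogonal M \<longleftrightarrow>
     prob_space M \<and>
     sets M = sets borel \<and>
     (AE R in M. orthogonal_matrix R) \<and>
     (\<forall>Q::real^'n^'n. orthogonal_matrix Q \<longrightarrow> distr M M (\<lambda>R. Q ** R) = M)"

end

(*
  Let t_i(R) = sum_j R_ij^2 nu_j, the diagonal of R diag(nu) R^T.  For orthogonal R the t_i
  lie between nu_min and nu_max and sum to d, so the bound ln t <= (t - 1) - (t - 1)^2 / (2 c)
  (for 0 < t <= c, 1 <= c; here c = nu_max^2) gives
  sum_i ln t_i <= (d - sum_i t_i^2) / (2 nu_max^2).

  The Haar mean of sum_i t_i^2 is computed exactly.  Replacing rows k and l of R by their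
  normalised sum and difference is left multiplication by an orthogonal matrix, so it leaves
  the mean unchanged; on the other hand, summed over all pairs k <> l, the change it causes is
  2 sum_j nu_j^2 + d^2 - (d + 2) sum_i t_i^2 pointwise.  Hence
  E sum_i ln t_i <= - sum_j (nu_j - 1)^2 / ((d + 2) nu_max^2), and the reverse bound
  ln nu >= (nu - 1) - (nu - 1)^2 / (2 nu_min^2) together with nu_max <= kappa nu_min
  finishes the proof.
*)

theory Submission
  imports Defs
begin

section \<open>Quadratic bounds for the logarithm\<close>

lemma nonneg_if_derivative_sign_at:
  fixes f f' :: "real \<Rightarrow> real"
  assumes "f a = 0"
    and deriv: "\<And>x. min a t \<le> x \<Longrightarrow> x \<le> max a t \<Longrightarrow> (f has_real_derivative f' x) (at x)"
    and sign: "\<And>x. min a t < x \<Longrightarrow> x < max a t \<Longrightarrow> 0 \<le> (x - a) * f' x"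
  shows "0 \<le> f t"
proof (cases t a rule: linorder_cases)
  case less
  then obtain z where z: "t < z" "z < a" "f a - f t = (a - t) * f' z"
    using MVT2[of t a f f'] deriv by auto
  then have "f' z \<le> 0" using sign[of z] less by (auto simp: zero_le_mult_iff)
  then have "(a - t) * f' z \<le> 0" using less by (simp add: mult_nonneg_nonpos)
  then show ?thesis using z \<open>f a = 0\<close> by linarith
next
  case greater
  then obtain z where z: "a < z" "z < t" "f t - f a = (t - a) * f' z"
    using MVT2[of a t f f'] deriv by auto
  then have "0 \<le> f' z" using sign[of z] greater by (simp add: zero_le_mult_iff)
  then show ?thesis using z \<open>f a = 0\<close> by simp
qed (simp add: \<open>f a = 0\<close>)

lemma has_real_derivative_ln_quadratic_gap:
  assumes "0 < x" "c \<noteq> 0"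
  shows "((\<lambda>x. x - 1 - (x - 1)\<^sup>2 / (2 * c) - ln x) has_real_derivative (x - 1) * (1 / x - 1 / c)) (at x)"
  using assms by (auto intro!: derivative_eq_intros simp: field_simps power2_eq_square)

lemma ln_le_quadratic:
  fixes t c :: real
  assumes "0 < t" "t \<le> c" "1 \<le> c"
  shows "ln t \<le> t - 1 - (t - 1)\<^sup>2 / (2 * c)"
proof -
  let ?g = "\<lambda>x. x - 1 - (x - 1)\<^sup>2 / (2 * c) - ln x"
  have "0 \<le> ?g t"
  proof (rule nonneg_if_derivative_sign_at[where a = 1 and f = ?g and f' = "\<lambda>x. (x - 1) * (1 / x - 1 / c)"])
    fix x assume "min 1 t \<le> x" "x \<le> max 1 t"
    then show "(?g has_real_derivative (x - 1) * (1 / x - 1 / c)) (at x)"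
      using assms by (intro has_real_derivative_ln_quadratic_gap) auto
  next
    fix x assume "min 1 t < x" "x < max 1 t"
    then have "1 / c \<le> 1 / x" using assms by (intro divide_left_mono) auto
    then show "0 \<le> (x - 1) * ((x - 1) * (1 / x - 1 / c))"
      by (simp flip: mult.assoc)
  qed simp
  then show ?thesis by simp
qed

lemma ln_ge_quadratic:
  fixes t c :: real
  assumes "0 < c" "c \<le> t" "c \<le> 1"
  shows "t - 1 - (t - 1)\<^sup>2 / (2 * c) \<le> ln t"
proof -
  let ?g = "\<lambda>x. - (x - 1 - (x - 1)\<^sup>2 / (2 * c) - ln x)"
  have "0 \<le> ?g t"
  proof (rule nonneg_if_derivative_sign_at[where a = 1 and f = ?g and f' = "\<lambda>x. - ((x - 1) * (1 / x - 1 / c))"])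
    fix x assume "min 1 t \<le> x" "x \<le> max 1 t"
    then show "(?g has_real_derivative - ((x - 1) * (1 / x - 1 / c))) (at x)"
      using assms by (intro DERIV_minus has_real_derivative_ln_quadratic_gap) auto
  next
    fix x assume "min 1 t < x" "x < max 1 t"
    then have "1 / x \<le> 1 / c" using assms by (intro divide_left_mono) auto
    then show "0 \<le> (x - 1) * - ((x - 1) * (1 / x - 1 / c))"
      by (simp add: mult_nonneg_nonpos[OF zero_le_square] flip: mult.assoc)
  qed simp
  then show ?thesis by simp
qed

lemma sum_power2_minus_one:
  fixes f :: "'a \<Rightarrow> real"
  shows "(\<Sum>i\<in>A. (f i - 1)\<^sup>2) = (\<Sum>i\<in>A. (f i)\<^sup>2) - 2 * (\<Sum>i\<in>A. f i) + real (card A)"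
  by (simp add: power2_diff sum.distrib sum_subtractf sum_distrib_left)

lemma sum_sum_sq_diff:
  fixes f :: "'a \<Rightarrow> real"
  shows "(\<Sum>k\<in>A. \<Sum>l\<in>A. (f k - f l)\<^sup>2) = 2 * real (card A) * (\<Sum>i\<in>A. (f i)\<^sup>2) - 2 * (\<Sum>i\<in>A. f i)\<^sup>2"
proof -
  have "(\<Sum>k\<in>A. \<Sum>l\<in>A. (f k - f l)\<^sup>2) =
        (\<Sum>k\<in>A. real (card A) * (f k)\<^sup>2 + (\<Sum>l\<in>A. (f l)\<^sup>2) - 2 * f k * (\<Sum>l\<in>A. f l))"
    by (simp add: power2_diff sum.distrib sum_subtractf sum_distrib_left)
  also have "\<dots> = 2 * real (card A) * (\<Sum>i\<in>A. (f i)\<^sup>2) - 2 * (\<Sum>i\<in>A. f i)\<^sup>2"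
    by (simp add: sum.distrib sum_subtractf power2_eq_square flip: sum_distrib_left sum_distrib_right)
  finally show ?thesis .
qed

lemma sum_ln_ge_quadratic:
  fixes v :: "real^'n"
  assumes "0 < c" "c \<le> 1" "\<And>j. c \<le> v $ j" and "(\<Sum>j\<in>UNIV. v $ j) = real CARD('n)"
  shows "- (\<Sum>j\<in>UNIV. (v $ j - 1)\<^sup>2) / (2 * c) \<le> (\<Sum>j\<in>UNIV. ln (v $ j))"
proof -
  have "- (\<Sum>j\<in>UNIV. (v $ j - 1)\<^sup>2) / (2 * c) = (\<Sum>j\<in>UNIV. v $ j - 1 - (v $ j - 1)\<^sup>2 / (2 * c))"
    using assms(4) by (simp add: sum_subtractf sum_divide_distrib)
  also have "\<dots> \<le> (\<Sum>j\<in>UNIV. ln (v $ j))"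
    using assms by (intro sum_mono ln_ge_quadratic) auto
  finally show ?thesis .
qed

lemma vec_uniform_pos_lower_bound:
  fixes v :: "real^'n"
  assumes "\<And>j. 0 < v $ j"
  obtains a where "0 < a" "\<And>j. a \<le> v $ j"
proof
  have "Min (range (($) v)) \<in> range (($) v)" by (intro Min_in) auto
  then show "0 < Min (range (($) v))" using assms by auto
  show "Min (range (($) v)) \<le> v $ j" for j by (intro Min_le) auto
qed

lemma mean_one_Min_Max_bounds:
  fixes v :: "real^'n"
  assumes "(\<Sum>j\<in>UNIV. v $ j) = real CARD('n)"
  shows "Min (range (($) v)) \<le> 1" "1 \<le> Max (range (($) v))"
proof -
  have "real CARD('n) * Min (range (($) v)) \<le> real CARD('n)"
    using sum_mono[of UNIV "\<lambda>_. Min (range (($) v))" "($) v"] assms by (simp add: Min_le)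
  then show "Min (range (($) v)) \<le> 1" by simp
  have "real CARD('n) \<le> real CARD('n) * Max (range (($) v))"
    using sum_mono[of UNIV "($) v" "\<lambda>_. Max (range (($) v))"] assms by (simp add: Max_ge)
  then show "1 \<le> Max (range (($) v))" by simp
qed

section \<open>Rows of an orthogonal matrix weighted by a vector\<close>

lemma orthogonal_matrix_rows_inner:
  fixes R :: "real^'n^'n"
  assumes "orthogonal_matrix R"
  shows "(\<Sum>j\<in>UNIV. R $ i $ j * R $ i' $ j) = (if i = i' then 1 else 0)"
proof -
  have "(R ** transpose R) $ i $ i' = mat 1 $ i $ i'"
    using assms by (simp add: orthogonal_matrix_def)
  then show ?thesis by (simp add: matrix_matrix_mult_def transpose_def mat_def)
qed

lemma orthogonal_matrix_columns_inner:
  fixes R :: "real^'n^'n"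
  assumes "orthogonal_matrix R"
  shows "(\<Sum>i\<in>UNIV. R $ i $ j * R $ i $ j') = (if j = j' then 1 else 0)"
proof -
  have "orthogonal_matrix (transpose R)" using assms by simp
  from orthogonal_matrix_rows_inner[OF this] show ?thesis by (simp add: transpose_def)
qed

lemma orthogonal_matrix_preserves_sum_sq:
  fixes R :: "real^'n^'n"
  assumes "orthogonal_matrix R"
  shows "(\<Sum>l\<in>UNIV. (\<Sum>j\<in>UNIV. R $ l $ j * w $ j)\<^sup>2) = (\<Sum>j\<in>UNIV. (w $ j)\<^sup>2)"
proof -
  have "(R *v w) \<bullet> (R *v w) = w \<bullet> ((transpose R ** R) *v w)"
    by (simp add: inner_commute dot_lmul_matrix[symmetric] matrix_vector_mul_assoc[symmetric])
  also have "\<dots> = w \<bullet> w"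
    using assms by (simp add: orthogonal_matrix_def)
  finally show ?thesis by (simp add: inner_vec_def matrix_vector_mult_def power2_eq_square)
qed

definition row_sqnorm :: "real^'n \<Rightarrow> real^'n^'n \<Rightarrow> 'n \<Rightarrow> real" where
  "row_sqnorm v R i = (\<Sum>j\<in>UNIV. (R $ i $ j)\<^sup>2 * v $ j)"

definition row_inner :: "real^'n \<Rightarrow> real^'n^'n \<Rightarrow> 'n \<Rightarrow> 'n \<Rightarrow> real" where
  "row_inner v R k l = (\<Sum>j\<in>UNIV. R $ k $ j * R $ l $ j * v $ j)"

definition row_energy :: "real^'n \<Rightarrow> real^'n^'n \<Rightarrow> real" where
  "row_energy v R = (\<Sum>i\<in>UNIV. (row_sqnorm v R i)\<^sup>2)"

lemma row_inner_same: "row_inner v R k k = row_sqnorm v R k"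
  unfolding row_inner_def row_sqnorm_def by (simp add: power2_eq_square)

lemma row_sqnorm_convex_bounds:
  fixes R :: "real^'n^'n"
  assumes "orthogonal_matrix R" and "\<And>j. a \<le> v $ j" and "\<And>j. v $ j \<le> b"
  shows "a \<le> row_sqnorm v R i" "row_sqnorm v R i \<le> b"
proof -
  have row: "(\<Sum>j\<in>UNIV. (R $ i $ j)\<^sup>2) = 1"
    using orthogonal_matrix_rows_inner[OF assms(1), of i i] by (simp add: power2_eq_square)
  have "a = (\<Sum>j\<in>UNIV. (R $ i $ j)\<^sup>2 * a)" by (simp add: sum_distrib_right[symmetric] row)
  also have "\<dots> \<le> row_sqnorm v R i" unfolding row_sqnorm_def
    by (intro sum_mono mult_left_mono assms) auto
  finally show "a \<le> row_sqnorm v R i" .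
  have "row_sqnorm v R i \<le> (\<Sum>j\<in>UNIV. (R $ i $ j)\<^sup>2 * b)" unfolding row_sqnorm_def
    by (intro sum_mono mult_left_mono assms) auto
  also have "\<dots> = b" by (simp add: sum_distrib_right[symmetric] row)
  finally show "row_sqnorm v R i \<le> b" .
qed

lemma sum_row_sqnorm:
  fixes R :: "real^'n^'n"
  assumes "orthogonal_matrix R"
  shows "(\<Sum>i\<in>UNIV. row_sqnorm v R i) = (\<Sum>j\<in>UNIV. v $ j)"
proof -
  have "(\<Sum>i\<in>UNIV. row_sqnorm v R i) = (\<Sum>j\<in>UNIV. (\<Sum>i\<in>UNIV. R $ i $ j * R $ i $ j) * v $ j)"
    unfolding row_sqnorm_def power2_eq_square sum_distrib_right by (rule sum.swap)
  also have "\<dots> = (\<Sum>j\<in>UNIV. v $ j)" using orthogonal_matrix_columns_inner[OF assms] by simp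
  finally show ?thesis .
qed

lemma sum_row_inner_sq:
  fixes R :: "real^'n^'n"
  assumes "orthogonal_matrix R"
  shows "(\<Sum>k\<in>UNIV. \<Sum>l\<in>UNIV. (row_inner v R k l)\<^sup>2) = (\<Sum>j\<in>UNIV. (v $ j)\<^sup>2)"
proof -
  have "(\<Sum>l\<in>UNIV. (row_inner v R k l)\<^sup>2) = row_sqnorm (v * v) R k" for k
    using orthogonal_matrix_preserves_sum_sq[OF assms, of "\<chi> j. R $ k $ j * v $ j"]
    unfolding row_inner_def row_sqnorm_def
    by (simp add: ac_simps power_mult_distrib power2_eq_square)
  then show ?thesis
    using sum_row_sqnorm[OF assms, of "v * v"] by (simp add: power2_eq_square)
qed

lemma sum_ln_row_sqnorm_le:
  fixes R :: "real^'n^'n"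
  assumes R: "orthogonal_matrix R" and pos: "\<And>j. 0 < v $ j" and le: "\<And>j. v $ j \<le> c"
    and "1 \<le> c" and sum: "(\<Sum>j\<in>UNIV. v $ j) = real CARD('n)"
  shows "(\<Sum>i\<in>UNIV. ln (row_sqnorm v R i)) \<le> (real CARD('n) - row_energy v R) / (2 * c)"
proof -
  obtain a where "0 < a" "\<And>j. a \<le> v $ j"
    using vec_uniform_pos_lower_bound pos by blast
  from row_sqnorm_convex_bounds[OF R this(2) le]
  have "(\<Sum>i\<in>UNIV. ln (row_sqnorm v R i)) \<le>
      (\<Sum>i\<in>UNIV. row_sqnorm v R i - 1 - (row_sqnorm v R i - 1)\<^sup>2 / (2 * c))"
    using \<open>0 < a\<close> \<open>1 \<le> c\<close> by (intro sum_mono ln_le_quadratic) (auto intro: less_le_trans)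
  also have "\<dots> = (real CARD('n) - row_energy v R) / (2 * c)"
    using sum_power2_minus_one[of "row_sqnorm v R" UNIV]
    by (simp add: sum_subtractf sum_row_sqnorm[OF R] sum row_energy_def diff_divide_distrib
        flip: sum_divide_distrib)
  finally show ?thesis .
qed

lemma abs_row_energy_le:
  fixes R :: "real^'n^'n"
  assumes "orthogonal_matrix R" and "\<And>j. \<bar>v $ j\<bar> \<le> b"
  shows "\<bar>row_energy v R\<bar> \<le> real CARD('n) * b\<^sup>2"
proof -
  have "- b \<le> v $ j" "v $ j \<le> b" for j
    using assms(2)[of j] by auto
  from row_sqnorm_convex_bounds[OF assms(1) this]
  have "\<bar>row_sqnorm v R i\<bar> \<le> b" for i
    by (meson abs_le_iff minus_le_iff)
  then have "(row_sqnorm v R i)\<^sup>2 \<le> b\<^sup>2" for i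
    by (metis abs_ge_zero order_trans power2_abs power_mono)
  then have "row_energy v R \<le> (\<Sum>i\<in>(UNIV::'n set). b\<^sup>2)"
    unfolding row_energy_def by (intro sum_mono)
  moreover have "0 \<le> row_energy v R" unfolding row_energy_def by (intro sum_nonneg) auto
  ultimately show ?thesis by simp
qed

lemma borel_measurable_row_energy: "row_energy v \<in> borel_measurable borel"
  unfolding row_energy_def row_sqnorm_def
  by (intro borel_measurable_continuous_onI continuous_intros)

section \<open>Mixing two rows\<close>

definition hadamard_pair :: "'n \<Rightarrow> 'n \<Rightarrow> real^'n^'n" where
  "hadamard_pair k l = (\<chi> i m.
     if i = k then ((if m = k then 1 else 0) + (if m = l then 1 else 0)) / sqrt 2
     else if i = l then ((if m = k then 1 else 0) - (if m = l then 1 else 0)) / sqrt 2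
     else if m = i then 1 else 0)"

lemma hadamard_pair_mult:
  fixes R :: "real^'n^'n"
  assumes "k \<noteq> l"
  shows "(hadamard_pair k l ** R) $ i $ j =
    (if i = k then (R $ k $ j + R $ l $ j) / sqrt 2
     else if i = l then (R $ k $ j - R $ l $ j) / sqrt 2 else R $ i $ j)"
  using assms
  by (simp add: matrix_matrix_mult_def hadamard_pair_def add_divide_distrib diff_divide_distrib
      distrib_right left_diff_distrib sum.distrib sum_subtractf if_distrib[of "\<lambda>x. x * _"]
      flip: sum_divide_distrib cong: if_cong)

lemma orthogonal_matrix_hadamard_pair:
  assumes "k \<noteq> l"
  shows "orthogonal_matrix (hadamard_pair k l)"
proof -
  have "transpose (hadamard_pair k l) = hadamard_pair k l"
    by (auto simp: vec_eq_iff transpose_def hadamard_pair_def)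
  moreover have "hadamard_pair k l ** hadamard_pair k l = mat 1"
    unfolding vec_eq_iff hadamard_pair_mult[OF assms]
    using assms by (auto simp: mat_def hadamard_pair_def field_simps)
  ultimately show ?thesis unfolding orthogonal_matrix_def by simp
qed

lemma row_sqnorm_hadamard_pair:
  fixes R :: "real^'n^'n"
  assumes "k \<noteq> l"
  shows "row_sqnorm v (hadamard_pair k l ** R) k = (row_sqnorm v R k + row_sqnorm v R l) / 2 + row_inner v R k l"
    and "row_sqnorm v (hadamard_pair k l ** R) l = (row_sqnorm v R k + row_sqnorm v R l) / 2 - row_inner v R k l"
    and "i \<noteq> k \<Longrightarrow> i \<noteq> l \<Longrightarrow> row_sqnorm v (hadamard_pair k l ** R) i = row_sqnorm v R i"
  using assms
  by (simp_all add: row_sqnorm_def row_inner_def hadamard_pair_mult power_divide power2_sum power2_diff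
      sum.distrib sum_subtractf add_divide_distrib diff_divide_distrib sum_divide_distrib
      algebra_simps)

lemma row_energy_hadamard_pair:
  fixes R :: "real^'n^'n"
  assumes "k \<noteq> l"
  shows "row_energy v (hadamard_pair k l ** R) - row_energy v R =
    2 * (row_inner v R k l)\<^sup>2 - (row_sqnorm v R k - row_sqnorm v R l)\<^sup>2 / 2"
proof -
  have split: "(\<Sum>i\<in>UNIV. f i) = f k + f l + (\<Sum>i\<in>UNIV - {k} - {l}. f i)" for f :: "'n \<Rightarrow> real"
    using assms by (simp add: sum.remove[of UNIV k] sum.remove[of "UNIV - {k}" l])
  have "(\<Sum>i\<in>UNIV - {k} - {l}. (row_sqnorm v (hadamard_pair k l ** R) i)\<^sup>2) =
        (\<Sum>i\<in>UNIV - {k} - {l}. (row_sqnorm v R i)\<^sup>2)"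
    using assms by (intro sum.cong refl) (simp add: row_sqnorm_hadamard_pair)
  then show ?thesis
    unfolding row_energy_def split[of "\<lambda>i. (row_sqnorm v (hadamard_pair k l ** R) i)\<^sup>2"]
      split[of "\<lambda>i. (row_sqnorm v R i)\<^sup>2"]
    using assms by (simp add: row_sqnorm_hadamard_pair power2_eq_square field_simps)
qed

lemma sum_row_energy_hadamard_pairs:
  fixes R :: "real^'n^'n"
  assumes "orthogonal_matrix R"
  shows "(\<Sum>k\<in>UNIV. \<Sum>l\<in>UNIV - {k}. row_energy v (hadamard_pair k l ** R) - row_energy v R) =
    2 * (\<Sum>j\<in>UNIV. (v $ j)\<^sup>2) + (\<Sum>j\<in>UNIV. v $ j)\<^sup>2 - (real CARD('n) + 2) * row_energy v R"
proof -
  define g where "g k l = 2 * (row_inner v R k l)\<^sup>2 - (row_sqnorm v R k - row_sqnorm v R l)\<^sup>2 / 2" for k l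
  have off_diagonal: "(\<Sum>l\<in>UNIV - {k}. row_energy v (hadamard_pair k l ** R) - row_energy v R) =
        (\<Sum>l\<in>UNIV. g k l) - 2 * (row_sqnorm v R k)\<^sup>2" for k
    using sum.remove[of UNIV k "g k"]
    by (simp add: g_def row_energy_hadamard_pair row_inner_same)
  have all_pairs: "(\<Sum>k\<in>UNIV. \<Sum>l\<in>UNIV. g k l) =
      2 * (\<Sum>j\<in>UNIV. (v $ j)\<^sup>2) - (real CARD('n) * row_energy v R - (\<Sum>j\<in>UNIV. v $ j)\<^sup>2)"
    unfolding g_def sum_subtractf sum_divide_distrib[symmetric] sum_distrib_left[symmetric]
      sum_row_inner_sq[OF assms] sum_sum_sq_diff sum_row_sqnorm[OF assms]
    by (simp add: row_energy_def diff_divide_distrib)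
  show ?thesis
    unfolding off_diagonal unfolding sum_subtractf all_pairs
    by (simp add: row_energy_def sum_distrib_left sum.distrib algebra_simps)
qed

section \<open>Haar expectations\<close>

lemma haar_orthogonal_borel_measurable:
  assumes "haar_orthogonal M" and "f \<in> borel_measurable borel"
  shows "f \<in> borel_measurable M"
  using assms measurable_cong_sets[of M borel] unfolding haar_orthogonal_def by blast

lemma haar_orthogonal_integrable_bounded:
  fixes f :: "real^'n^'n \<Rightarrow> real"
  assumes haar: "haar_orthogonal M" and f: "f \<in> borel_measurable borel"
    and bound: "\<And>R. orthogonal_matrix R \<Longrightarrow> \<bar>f R\<bar> \<le> B"
  shows "integrable M f"
proof -
  interpret prob_space M using haar unfolding haar_orthogonal_def by blast
  have "AE R in M. orthogonal_matrix R" using haar unfolding haar_orthogonal_def by blast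
  then have "AE R in M. norm (f R) \<le> B" by eventually_elim (simp add: bound)
  then show ?thesis
    by (rule integrable_const_bound) (rule haar_orthogonal_borel_measurable[OF haar f])
qed

lemma borel_measurable_matrix_mult_left:
  "(\<lambda>R::real^'n^'n. Q ** R) \<in> borel_measurable borel"
  unfolding matrix_matrix_mult_def by (intro borel_measurable_continuous_onI continuous_intros)

lemma haar_orthogonal_integral_left_mult:
  fixes f :: "real^'n^'n \<Rightarrow> real"
  assumes haar: "haar_orthogonal M" and Q: "orthogonal_matrix Q" and f: "f \<in> borel_measurable borel"
  shows "(\<integral>R. f (Q ** R) \<partial>M) = integral\<^sup>L M f"
proof -
  have "(\<lambda>R. Q ** R) \<in> measurable M M"
    using haar borel_measurable_matrix_mult_left measurable_cong_sets[of M borel M borel]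
    unfolding haar_orthogonal_def by blast
  then have "(\<integral>R. f (Q ** R) \<partial>M) = integral\<^sup>L (distr M M (\<lambda>R. Q ** R)) f"
    using haar_orthogonal_borel_measurable[OF haar f] by (simp add: integral_distr)
  also have "\<dots> = integral\<^sup>L M f"
    using haar Q unfolding haar_orthogonal_def by simp
  finally show ?thesis .
qed

lemma haar_integrable_row_energy_left_mult:
  fixes M :: "(real^'n^'n) measure"
  assumes haar: "haar_orthogonal M" and Q: "orthogonal_matrix Q"
  shows "integrable M (\<lambda>R. row_energy v (Q ** R))"
proof (rule haar_orthogonal_integrable_bounded[OF haar])
  show "(\<lambda>R. row_energy v (Q ** R)) \<in> borel_measurable borel"
    by (rule measurable_compose[OF borel_measurable_matrix_mult_left borel_measurable_row_energy])
  show "\<bar>row_energy v (Q ** R)\<bar> \<le> real CARD('n) * (norm v)\<^sup>2" if "orthogonal_matrix R" for R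
    using abs_row_energy_le[OF orthogonal_matrix_mul[OF Q that]] component_le_norm_cart
    by (metis real_norm_def)
qed

lemma haar_integral_row_energy:
  fixes M :: "(real^'n^'n) measure"
  assumes haar: "haar_orthogonal M"
  shows "(real CARD('n) + 2) * (\<integral>R. row_energy v R \<partial>M) =
    2 * (\<Sum>j\<in>UNIV. (v $ j)\<^sup>2) + (\<Sum>j\<in>UNIV. v $ j)\<^sup>2"
proof -
  interpret prob_space M using haar unfolding haar_orthogonal_def by blast
  define c where "c = 2 * (\<Sum>j\<in>UNIV. (v $ j)\<^sup>2) + (\<Sum>j\<in>UNIV. v $ j)\<^sup>2"
  note int = haar_integrable_row_energy_left_mult[OF haar]
  have int_id: "integrable M (row_energy v)"
    using int[OF orthogonal_matrix_id] by simp
  have int_diff: "integrable M (\<lambda>R. row_energy v (hadamard_pair k l ** R) - row_energy v R)"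
    if "l \<in> UNIV - {k}" for k l
    using that by (simp add: int int_id orthogonal_matrix_hadamard_pair)
  have "0 = (\<Sum>k\<in>UNIV. \<Sum>l\<in>UNIV - {k}.
      \<integral>R. row_energy v (hadamard_pair k l ** R) - row_energy v R \<partial>M)"
    using int int_id
    by (simp add: orthogonal_matrix_hadamard_pair haar_orthogonal_integral_left_mult[OF haar
          orthogonal_matrix_hadamard_pair borel_measurable_row_energy])
  also have "\<dots> = (\<integral>R. (\<Sum>k\<in>UNIV. \<Sum>l\<in>UNIV - {k}.
      row_energy v (hadamard_pair k l ** R) - row_energy v R) \<partial>M)"
    using int_diff
    by (subst Bochner_Integration.integral_sum)
      (auto intro!: sum.cong Bochner_Integration.integral_sum[symmetric]
        Bochner_Integration.integrable_sum)
  also have "\<dots> = (\<integral>R. c - (real CARD('n) + 2) * row_energy v R \<partial>M)"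
  proof (rule integral_cong_AE)
    show "AE R in M. (\<Sum>k\<in>UNIV. \<Sum>l\<in>UNIV - {k}. row_energy v (hadamard_pair k l ** R) - row_energy v R) =
        c - (real CARD('n) + 2) * row_energy v R"
      using haar unfolding haar_orthogonal_def c_def by (auto simp: sum_row_energy_hadamard_pairs)
  qed (use int_diff int_id in \<open>auto intro!: borel_measurable_integrable Bochner_Integration.integrable_sum\<close>)
  also have "\<dots> = c - (real CARD('n) + 2) * (\<integral>R. row_energy v R \<partial>M)"
    using int_id by (simp add: prob_space)
  finally show ?thesis unfolding c_def by simp
qed

lemma haar_integral_sum_ln_row_sqnorm_le:
  fixes v :: "real^'n" and M :: "(real^'n^'n) measure"
  assumes haar: "haar_orthogonal M" and pos: "\<And>j. 0 < v $ j" and le: "\<And>j. v $ j \<le> c"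
    and c: "1 \<le> c" and sum: "(\<Sum>j\<in>UNIV. v $ j) = real CARD('n)"
  shows "(\<integral>R. (\<Sum>i\<in>UNIV. ln (\<Sum>j\<in>UNIV. (R $ i $ j)\<^sup>2 * v $ j)) \<partial>M)
    \<le> - (\<Sum>j\<in>UNIV. (v $ j - 1)\<^sup>2) / ((real CARD('n) + 2) * c)"
proof -
  interpret prob_space M using haar unfolding haar_orthogonal_def by blast
  obtain a where a: "0 < a" "\<And>j. a \<le> v $ j"
    using vec_uniform_pos_lower_bound pos by blast
  have int_energy: "integrable M (row_energy v)"
    using haar_integrable_row_energy_left_mult[OF haar orthogonal_matrix_id] by simp
  have int_ln: "integrable M (\<lambda>R. \<Sum>i\<in>UNIV. ln (row_sqnorm v R i))"
  proof (rule haar_orthogonal_integrable_bounded[OF haar])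
    show "(\<lambda>R. \<Sum>i\<in>UNIV. ln (row_sqnorm v R i)) \<in> borel_measurable borel"
      unfolding row_sqnorm_def
      by (intro borel_measurable_sum borel_measurable_ln borel_measurable_continuous_onI continuous_intros)
    show "\<bar>\<Sum>i\<in>UNIV. ln (row_sqnorm v R i)\<bar> \<le> real CARD('n) * (\<bar>ln a\<bar> + \<bar>ln c\<bar>)"
      if R: "orthogonal_matrix R" for R
    proof -
      have "\<bar>ln (row_sqnorm v R i)\<bar> \<le> \<bar>ln a\<bar> + \<bar>ln c\<bar>" for i
      proof -
        have "ln a \<le> ln (row_sqnorm v R i)" "ln (row_sqnorm v R i) \<le> ln c"
          using row_sqnorm_convex_bounds[OF R a(2) le, of i] a(1) by auto
        then show ?thesis by linarith
      qed
      then show ?thesis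
        by (intro order_trans[OF sum_abs] sum_bounded_above)
    qed
  qed
  have "(\<integral>R. (\<Sum>i\<in>UNIV. ln (row_sqnorm v R i)) \<partial>M) \<le> (\<integral>R. (real CARD('n) - row_energy v R) / (2 * c) \<partial>M)"
  proof (rule integral_mono_AE[OF int_ln])
    show "integrable M (\<lambda>R. (real CARD('n) - row_energy v R) / (2 * c))"
      using int_energy by simp
    show "AE R in M. (\<Sum>i\<in>UNIV. ln (row_sqnorm v R i)) \<le> (real CARD('n) - row_energy v R) / (2 * c)"
      using haar unfolding haar_orthogonal_def
      by (auto elim!: eventually_mono intro: sum_ln_row_sqnorm_le[OF _ pos le c sum])
  qed
  also have "\<dots> = (real CARD('n) - (\<integral>R. row_energy v R \<partial>M)) / (2 * c)"
    using int_energy by (simp add: prob_space diff_divide_distrib)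
  also have "\<dots> = - (\<Sum>j\<in>UNIV. (v $ j - 1)\<^sup>2) / ((real CARD('n) + 2) * c)"
  proof -
    have "(real CARD('n) + 2) * (real CARD('n) - (\<integral>R. row_energy v R \<partial>M)) = - 2 * (\<Sum>j\<in>UNIV. (v $ j - 1)\<^sup>2)"
      using haar_integral_row_energy[OF haar, of v] sum_power2_minus_one[of "($) v" UNIV]
      by (simp add: sum algebra_simps power2_eq_square)
    then have "real CARD('n) - (\<integral>R. row_energy v R \<partial>M) =
        - 2 * (\<Sum>j\<in>UNIV. (v $ j - 1)\<^sup>2) / (real CARD('n) + 2)"
      by (metis add_nonneg_pos of_nat_0_le_iff zero_less_numeral less_numeral_extra(3)
          nonzero_mult_div_cancel_left)
    then show ?thesis by simp
  qed
  finally show ?thesis by (simp add: row_sqnorm_def)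
qed

theorem lemma2:
  fixes \<nu> :: "real^'n" and \<kappa> :: real and M :: "(real^'n^'n) measure"
  assumes pos: "\<And>i. \<nu> $ i > 0"
    and sum_d: "(\<Sum>i\<in>UNIV. \<nu> $ i) = real CARD('n)"
    and kappa_ge: "\<kappa> \<ge> 1"
    and cond: "Max (range (\<lambda>i. \<nu> $ i)) / Min (range (\<lambda>i. \<nu> $ i)) \<le> \<kappa>"
    and haar: "haar_orthogonal M"
  shows "(\<integral>R. (\<Sum>i\<in>UNIV. ln (\<Sum>j\<in>UNIV. (R $ i $ j)\<^sup>2 * \<nu> $ j)) \<partial>M)
           \<le> 2 / ((real CARD('n) + 2) * \<kappa>\<^sup>2) * (\<Sum>i\<in>UNIV. ln (\<nu> $ i))"
proof -
  define m where "m = Max (range (($) \<nu>))"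
  define \<mu> where "\<mu> = Min (range (($) \<nu>))"
  define X where "X = (\<Sum>j\<in>UNIV. (\<nu> $ j - 1)\<^sup>2)"
  have le_m: "\<nu> $ j \<le> m" and ge_\<mu>: "\<mu> \<le> \<nu> $ j" for j
    unfolding m_def \<mu>_def by (intro Max_ge Min_le; simp)+
  have "0 < \<mu>" unfolding \<mu>_def using pos by (subst Min_gr_iff) auto
  have "\<mu> \<le> 1" "1 \<le> m" using mean_one_Min_Max_bounds[OF sum_d] unfolding m_def \<mu>_def .
  have "m \<le> \<kappa> * \<mu>" using cond \<open>0 < \<mu>\<close> by (simp add: m_def \<mu>_def divide_le_eq)
  have upper: "(\<integral>R. (\<Sum>i\<in>UNIV. ln (\<Sum>j\<in>UNIV. (R $ i $ j)\<^sup>2 * \<nu> $ j)) \<partial>M)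
      \<le> - X / ((real CARD('n) + 2) * m\<^sup>2)"
  proof -
    have "m \<le> m\<^sup>2" using \<open>1 \<le> m\<close> by (simp add: power2_eq_square)
    then show ?thesis
      unfolding X_def using le_m \<open>1 \<le> m\<close>
      by (intro haar_integral_sum_ln_row_sqnorm_le[OF haar pos _ _ sum_d])
        (auto intro: order_trans simp: one_le_power)
  qed
  have lower: "- X / (2 * \<mu>\<^sup>2) \<le> (\<Sum>i\<in>UNIV. ln (\<nu> $ i))"
    unfolding X_def using \<open>0 < \<mu>\<close> \<open>\<mu> \<le> 1\<close> ge_\<mu>
    by (intro sum_ln_ge_quadratic[OF _ _ _ sum_d])
      (auto intro: order_trans[OF _ ge_\<mu>] simp: power2_eq_square mult_le_one)
  have "0 \<le> X" unfolding X_def by (intro sum_nonneg) simp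
  have "2 / ((real CARD('n) + 2) * \<kappa>\<^sup>2) * (X / (2 * \<mu>\<^sup>2)) = X / ((real CARD('n) + 2) * (\<kappa> * \<mu>)\<^sup>2)"
    by (simp add: power_mult_distrib field_simps)
  also have "\<dots> \<le> X / ((real CARD('n) + 2) * m\<^sup>2)"
    using \<open>0 \<le> X\<close> \<open>1 \<le> m\<close> \<open>m \<le> \<kappa> * \<mu>\<close>
    by (intro divide_left_mono mult_left_mono power_mono) (auto intro!: mult_pos_pos)
  finally have "- X / ((real CARD('n) + 2) * m\<^sup>2) \<le> 2 / ((real CARD('n) + 2) * \<kappa>\<^sup>2) * (- X / (2 * \<mu>\<^sup>2))"
    by simp
  also have "\<dots> \<le> 2 / ((real CARD('n) + 2) * \<kappa>\<^sup>2) * (\<Sum>i\<in>UNIV. ln (\<nu> $ i))"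
    using lower by (intro mult_left_mono) auto
  finally show ?thesis using upper by linarith
qed

end
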